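(* Let $S$ be a $\delta$-accurate approximate subdivision and let $e[v,a],f[w,b]\in S$ with $e\prec_y f$, $a_x=b_x$ and $a_y>b_y$ (a violation of consistency constraint (2) at the right endpoints). Then ${\rm dist}(a,f)<\delta$ or ${\rm dist}(b,e)<\delta$.
   Context: Points $p\in\mathbb{R}^2$ have coordinates $(p_x,p_y)$. A curve is an open, bounded, piecewise-algebraic arc that is both $x$-monotone and $y$-monotone; a curve with endpoints $v,a$ where $v_x\le a_x$ is written $e[v,a]$. Sets $s,t$ overlap in $x$ if there exist $p\in s$, $q\in t$ with $p_x=q_x$. For sets $s,t$ that overlap in $x$, $s<_y t$ means $p_y<q_y$ for all $p\in s$, $q\in t$ with $p_x=q_x$. An approximate subdivision is a set $S$ of curves together with a binary relation $\prec_y$ on $S$ whose transitive closure is irreflexive, such that for $e,f\in S$: $e\prec_y f$ or $f\prec_y e$ holds iff $e$ and $f$ overlap in $x$. ${\rm dist}(a,e)=\inf_{q\in e}|a-q|$. A $\delta$-deformation of a curve $e$ is an $x$-monotone curve with the same endpoints as $e$ whose Hausdorff distance from $e$ is less than $\delta$. $S$ is $\delta$-accurate if whenever $e\prec_y f$, there exist $\delta$-deformations $\tilde e$ of $e$ and $\tilde f$ of $f$ with $\tilde e<_y\tilde f$. *)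

theory Defs
  imports "HOL-Analysis.Analysis"
begin

type_synonym pt = "real \<times> real"

text \<open>Bivariate real polynomials, given by a coefficient function with finite support.\<close>
definition bipoly :: "(nat \<times> nat \<Rightarrow> real) \<Rightarrow> pt \<Rightarrow> real" where
  "bipoly c p = (\<Sum>ij\<in>{ij. c ij \<noteq> 0}. c ij * fst p ^ fst ij * snd p ^ snd ij)"

definition nonzero_bipoly :: "(nat \<times> nat \<Rightarrow> real) \<Rightarrow> bool" where
  "nonzero_bipoly c \<longleftrightarrow> finite {ij. c ij \<noteq> 0} \<and> (\<exists>ij. c ij \<noteq> 0)"

definition piecewise_algebraic :: "(real \<Rightarrow> pt) \<Rightarrow> bool" where
  "piecewise_algebraic g \<longleftrightarrow>
     (\<exists>(n::nat) t. t 0 = 0 \<and> t n = 1 \<and> (\<forall>i<n. t i < t (Suc i)) \<and>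
        (\<forall>i<n. \<exists>c. nonzero_bipoly c \<and> (\<forall>s\<in>{t i..t (Suc i)}. bipoly c (g s) = 0)))"

definition coord_monotone :: "(pt \<Rightarrow> real) \<Rightarrow> (real \<Rightarrow> pt) \<Rightarrow> bool" where
  "coord_monotone h g \<longleftrightarrow>
     (\<forall>s t. 0 \<le> s \<and> s \<le> t \<and> t \<le> 1 \<longrightarrow> h (g s) \<le> h (g t)) \<or>
     (\<forall>s t. 0 \<le> s \<and> s \<le> t \<and> t \<le> 1 \<longrightarrow> h (g t) \<le> h (g s))"

definition xmono_open_arc :: "pt set \<Rightarrow> pt \<Rightarrow> pt \<Rightarrow> bool" where
  "xmono_open_arc e v a \<longleftrightarrow>
     (\<exists>g. arc g \<and> pathstart g = v \<and> pathfinish g = a \<and> e = g ` {0<..<1} \<and>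
          coord_monotone fst g)"

definition curve :: "pt set \<Rightarrow> pt \<Rightarrow> pt \<Rightarrow> bool" where
  "curve e v a \<longleftrightarrow> fst v \<le> fst a \<and> bounded e \<and>
     (\<exists>g. arc g \<and> pathstart g = v \<and> pathfinish g = a \<and> e = g ` {0<..<1} \<and>
          coord_monotone fst g \<and> coord_monotone snd g \<and> piecewise_algebraic g)"

definition overlap_x :: "pt set \<Rightarrow> pt set \<Rightarrow> bool" where
  "overlap_x s t \<longleftrightarrow> (\<exists>p\<in>s. \<exists>q\<in>t. fst p = fst q)"

definition below_y :: "pt set \<Rightarrow> pt set \<Rightarrow> bool" where
  "below_y s t \<longleftrightarrow> overlap_x s t \<and> (\<forall>p\<in>s. \<forall>q\<in>t. fst p = fst q \<longrightarrow> snd p < snd q)"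

definition approx_subdivision :: "pt set set \<Rightarrow> (pt set \<times> pt set) set \<Rightarrow> bool" where
  "approx_subdivision S R \<longleftrightarrow>
     (\<forall>e\<in>S. \<exists>v a. curve e v a) \<and> R \<subseteq> S \<times> S \<and> irrefl (R\<^sup>+) \<and>
     (\<forall>e\<in>S. \<forall>f\<in>S. e \<noteq> f \<longrightarrow> (((e, f) \<in> R \<or> (f, e) \<in> R) \<longleftrightarrow> overlap_x e f))"

definition hausdorff_dist :: "pt set \<Rightarrow> pt set \<Rightarrow> real" where
  "hausdorff_dist A B = max (SUP p\<in>A. infdist p B) (SUP q\<in>B. infdist q A)"

definition deformation :: "real \<Rightarrow> pt set \<Rightarrow> pt set \<Rightarrow> bool" where
  "deformation \<delta> e e' \<longleftrightarrow>
     (\<exists>v a. curve e v a \<and> xmono_open_arc e' v a) \<and> hausdorff_dist e' e < \<delta>"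

definition delta_accurate :: "real \<Rightarrow> pt set set \<Rightarrow> (pt set \<times> pt set) set \<Rightarrow> bool" where
  "delta_accurate \<delta> S R \<longleftrightarrow>
     (\<forall>e f. (e, f) \<in> R \<longrightarrow>
        (\<exists>e' f'. deformation \<delta> e e' \<and> deformation \<delta> f f' \<and> below_y e' f'))"

end

theory Submission
  imports Defs
begin

(* By delta-accuracy, e and f admit delta-deformations e' and f' with e' <_y f'.
   Parametrise e' by a path h from v to a and f' by a path k from w to b; since the
   deformations are x-monotone and v_x <= a_x, w_x <= b_x, both x-coordinates increase
   weakly up to X = a_x = b_x.  Let alpha and beta be the first times at which h and k reach
   the vertical line x = X.  Strict order of e' below f' passes to limits (below_y_limit):
     - if alpha, beta < 1, both arcs run along the line x = X near their ends, so a_y <= b_y;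
     - if alpha, beta > 0, approaching the line from the left gives h(alpha)_y <= k(beta)_y.
   Since a_y > b_y, one of the arcs (say e') meets the line only at its endpoint; then the
   vertical end piece k([beta,1]) of f' sweeps over a, so a lies on f' (or symmetrically
   b lies on e').  A point of a deformation of e lies within the Hausdorff distance of e,
   hence below delta. *)

section \<open>Parametrising deformations\<close>

lemma arc_open_image_boundary:
  fixes g :: "real \<Rightarrow> pt"
  assumes "arc g"
  shows "closure (g ` {0<..<1}) - g ` {0<..<1} = {g 0, g 1}"
proof -
  have cont: "continuous_on {0..1} g" and inj: "inj_on g {0..1}"
    using assms by (auto simp: arc_def path_def)
  have "closed (g ` {0..1})"
    using cont by (intro compact_imp_closed compact_continuous_image) auto
  hence "closure (g ` {0<..<1}) \<subseteq> g ` {0..1}"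
    by (intro closure_minimal) auto
  moreover have "g ` {0..1} \<subseteq> closure (g ` {0<..<1})"
    using image_closure_subset[of "{0<..<1::real}" g "closure (g ` {0<..<1})"] cont
    by (simp add: closure_subset)
  ultimately have "closure (g ` {0<..<1}) = g ` {0..1}" by blast
  moreover have "g ` {0..1} - g ` {0<..<1} = g ` ({0..1} - {0<..<1})"
    using inj by (intro inj_on_image_set_diff[symmetric]) auto
  moreover have "{0..1} - {0<..<1} = {0, 1::real}" by auto
  ultimately show ?thesis by simp
qed

lemma curve_endpoints_unique:
  assumes "curve e v a" and "curve e v' a'"
  shows "{v', a'} = {v, a}"
proof -
  have boundary: "closure e - e = {v, a}" if c: "curve e v a" for v a
  proof -
    obtain g where "arc g" "pathstart g = v" "pathfinish g = a" "e = g ` {0<..<1}"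
      using c unfolding curve_def by blast
    thus ?thesis using arc_open_image_boundary by (simp add: pathstart_def pathfinish_def)
  qed
  show ?thesis using boundary[OF assms(1)] boundary[OF assms(2)] by simp
qed

text \<open>Reversing a path changes neither its open image nor the monotonicity of a
  coordinate; this lets us orient every deformation from v to a.\<close>
lemma open_arc_image_reversepath:
  "reversepath g ` {0<..<1} = g ` {0<..<1}"
proof -
  have "(\<lambda>s::real. 1 - s) ` {0<..<1} = {0<..<1}"
    by (auto simp: image_iff intro!: bexI[where x="1 - x" for x])
  moreover have "reversepath g ` {0<..<1} = g ` ((\<lambda>s. 1 - s) ` {0<..<1})"
    by (simp add: reversepath_def image_image)
  ultimately show ?thesis by simp
qed

lemma coord_monotone_reversepath:
  assumes "coord_monotone c g"
  shows "coord_monotone c (reversepath g)"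
proof -
  have flip: "0 \<le> 1 - t \<and> 1 - t \<le> 1 - s \<and> 1 - s \<le> (1::real)" if "0 \<le> s" "s \<le> t" "t \<le> 1" for s t
    using that by simp
  from assms show ?thesis
    unfolding coord_monotone_def reversepath_def by (meson flip)
qed

lemma coord_monotone_mono_on:
  assumes "coord_monotone c g" and "c (g 0) \<le> c (g 1)"
  shows "mono_on {0..1} (\<lambda>s. c (g s))"
  using assms unfolding coord_monotone_def mono_on_def
  by (smt (verit, best) atLeastAtMost_iff)

lemma deformation_parametrisation:
  assumes "curve e v a" and "deformation \<delta> e e'"
  obtains h where "path h" "h 0 = v" "h 1 = a" "e' = h ` {0<..<1}"
    "mono_on {0..1} (\<lambda>s. fst (h s))"
proof -
  obtain v' a' h where c': "curve e v' a'" and "arc h" and h: "h 0 = v'" "h 1 = a'"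
      "e' = h ` {0<..<1}" "coord_monotone fst h"
    using assms(2) unfolding deformation_def xmono_open_arc_def pathstart_def pathfinish_def
    by blast
  have "v' \<noteq> a'" using arc_distinct_ends[OF \<open>arc h\<close>] h by (simp add: pathstart_def pathfinish_def)
  moreover have "{v', a'} = {v, a}" using curve_endpoints_unique[OF assms(1) c'] .
  ultimately consider "v' = v" "a' = a" | "v' = a" "a' = v" by (metis doubleton_eq_iff)
  then obtain g where g: "path g" "g 0 = v" "g 1 = a" "e' = g ` {0<..<1}" "coord_monotone fst g"
  proof cases
    case 1
    thus ?thesis using that \<open>arc h\<close> h arc_imp_path by blast
  next
    case 2
    thus ?thesis using that[of "reversepath h"] \<open>arc h\<close> h
      by (simp add: arc_imp_path open_arc_image_reversepath coord_monotone_reversepath)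
        (simp add: reversepath_def)
  qed
  moreover have "fst v \<le> fst a" using assms(1) unfolding curve_def by simp
  ultimately show ?thesis using that coord_monotone_mono_on by metis
qed

lemma infdist_le_hausdorff_dist:
  assumes "bounded A" and "p \<in> A"
  shows "infdist p B \<le> hausdorff_dist A B"
proof -
  obtain c r where "A \<subseteq> cball c r" using assms(1) bounded_subset_cball by blast
  hence "\<forall>q\<in>A. infdist q B \<le> infdist c B + r"
    using infdist_triangle[of _ B c] by (smt (verit) dist_commute mem_cball subsetD)
  hence "bdd_above ((\<lambda>q. infdist q B) ` A)" by (auto intro: bdd_aboveI2)
  hence "infdist p B \<le> (SUP q\<in>A. infdist q B)" using assms(2) by (rule cSUP_upper2) simp
  thus ?thesis unfolding hausdorff_dist_def by linarith
qed

lemma deformation_infdist: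
  assumes "curve e v a" and "deformation \<delta> e e'" and "p \<in> e'"
  shows "infdist p e < \<delta>"
proof -
  obtain h where "path h" "e' = h ` {0<..<1}"
    using deformation_parametrisation[OF assms(1,2)] by metis
  hence "bounded e'"
    by (metis bounded_path_image bounded_subset greaterThanLessThan_subseteq_atLeastAtMost_iff
        image_mono order_refl path_image_def)
  hence "infdist p e \<le> hausdorff_dist e' e" using assms(3) by (rule infdist_le_hausdorff_dist)
  moreover have "hausdorff_dist e' e < \<delta>" using assms(2) unfolding deformation_def by blast
  ultimately show ?thesis by linarith
qed

section \<open>Two paths ending on a common vertical line\<close>

lemma first_hitting_time:
  fixes h :: "real \<Rightarrow> pt"
  assumes "path h" and "mono_on {0..1} (\<lambda>s. fst (h s))"
  obtains \<alpha> where "\<alpha> \<in> {0..1}" "\<And>s. 0 \<le> s \<Longrightarrow> s < \<alpha> \<Longrightarrow> fst (h s) < fst (h 1)"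
    "\<And>s. \<alpha> \<le> s \<Longrightarrow> s \<le> 1 \<Longrightarrow> fst (h s) = fst (h 1)"
proof -
  define T where "T = {s \<in> {0..1}. fst (h s) = fst (h 1)}"
  have "continuous_on {0..1} (\<lambda>s. fst (h s))"
    using assms(1) unfolding path_def by (intro continuous_intros)
  hence "closed T" unfolding T_def by (rule continuous_closed_preimage_constant) auto
  moreover have "1 \<in> T" and "bdd_below T" unfolding T_def by (auto intro: bdd_belowI[of _ 0])
  ultimately have "Inf T \<in> T" using closed_contains_Inf by blast
  have below: "fst (h s) \<le> fst (h 1)" if "s \<in> {0..1}" for s
    using assms(2) that by (auto intro: mono_onD)
  show ?thesis
  proof (rule that[of "Inf T"])
    show "Inf T \<in> {0..1}" using \<open>Inf T \<in> T\<close> unfolding T_def by blast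
  next
    fix s assume "0 \<le> s" "s < Inf T"
    moreover from this have "s \<notin> T" using cInf_lower[OF _ \<open>bdd_below T\<close>] by force
    ultimately show "fst (h s) < fst (h 1)"
      using below \<open>Inf T \<in> T\<close> unfolding T_def by force
  next
    fix s assume "Inf T \<le> s" "s \<le> 1"
    moreover have "Inf T \<in> {0..1}" "fst (h (Inf T)) = fst (h 1)"
      using \<open>Inf T \<in> T\<close> unfolding T_def by auto
    ultimately have "fst (h 1) \<le> fst (h s)"
      using mono_onD[OF assms(2), of "Inf T" s] by auto
    thus "fst (h s) = fst (h 1)" using below[of s] \<open>Inf T \<in> {0..1}\<close> \<open>Inf T \<le> s\<close> \<open>s \<le> 1\<close> by auto
  qed
qed

lemma below_y_limit:
  fixes h k :: "real \<Rightarrow> pt" and u w :: "'a \<Rightarrow> real"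
  assumes "below_y (h ` {0<..<1}) (k ` {0<..<1})" and "path h" and "path k"
    and "F \<noteq> bot" and "(u \<longlongrightarrow> s) F" and "(w \<longlongrightarrow> t) F"
    and "s \<in> {0..1}" and "t \<in> {0..1}"
    and "eventually (\<lambda>x. u x \<in> {0<..<1} \<and> w x \<in> {0<..<1} \<and> fst (h (u x)) = fst (k (w x))) F"
  shows "snd (h s) \<le> snd (k t)"
proof (rule tendsto_le[OF assms(4)])
  have "\<forall>\<^sub>F x in F. u x \<in> {0..1}" "\<forall>\<^sub>F x in F. w x \<in> {0..1}"
    using assms(9) by (auto elim: eventually_mono)
  thus "((\<lambda>x. snd (h (u x))) \<longlongrightarrow> snd (h s)) F" "((\<lambda>x. snd (k (w x))) \<longlongrightarrow> snd (k t)) F"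
    using assms(2,3,5-8) unfolding path_def
    by (auto intro!: tendsto_snd continuous_on_tendsto_compose[where s="{0..1}"])
  show "\<forall>\<^sub>F x in F. snd (h (u x)) \<le> snd (k (w x))"
    using assms(9) by (rule eventually_mono)
      (use assms(1) in \<open>auto simp: below_y_def intro!: less_imp_le\<close>)
qed

lemma approach_hitting_time:
  fixes h :: "real \<Rightarrow> pt"
  assumes "path h" and "mono_on {0..1} (\<lambda>s. fst (h s))" and "0 < \<alpha>" and "\<alpha> \<le> 1"
    and "\<And>s. 0 \<le> s \<Longrightarrow> s < \<alpha> \<Longrightarrow> fst (h s) < X" and "fst (h \<alpha>) = X"
  obtains u where "(u \<longlongrightarrow> \<alpha>) (at_left X)"
    "eventually (\<lambda>x. u x \<in> {0<..<\<alpha>} \<and> fst (h (u x)) = x) (at_left X)"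
proof -
  have cont: "continuous_on {0..\<alpha>} (\<lambda>s. fst (h s))"
    using assms(1,4) unfolding path_def by (intro continuous_intros) (auto elim: continuous_on_subset)
  define u where "u x = (SOME s. s \<in> {0<..<\<alpha>} \<and> fst (h s) = x)" for x
  have u: "u x \<in> {0<..<\<alpha>} \<and> fst (h (u x)) = x" if x: "x \<in> {fst (h 0)<..<X}" for x
  proof -
    obtain s where "0 \<le> s" "s \<le> \<alpha>" "fst (h s) = x"
      using IVT'[OF _ _ _ cont, of x] x assms(3,6) by auto
    hence "s \<in> {0<..<\<alpha>} \<and> fst (h s) = x" using x assms(6) by (auto simp: order.order_iff_strict)
    thus ?thesis unfolding u_def by (rule someI)
  qed
  have near: "eventually (\<lambda>x. x \<in> {fst (h 0)<..<X}) (at_left X)"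
    using eventually_at_left_real assms(3,5) by blast
  show ?thesis
  proof (rule that)
    show "eventually (\<lambda>x. u x \<in> {0<..<\<alpha>} \<and> fst (h (u x)) = x) (at_left X)"
      using near by (rule eventually_mono) (use u in blast)
    show "(u \<longlongrightarrow> \<alpha>) (at_left X)"
    proof (rule order_tendstoI)
      fix r assume "r < \<alpha>"
      define r' where "r' = max r 0"
      have r': "r' \<in> {0..1}" "r \<le> r'" "fst (h r') < X" "fst (h 0) < X"
        using assms(5)[of r'] assms(5)[of 0] assms(3,4) \<open>r < \<alpha>\<close> unfolding r'_def by auto
      hence "eventually (\<lambda>x. x \<in> {max (fst (h r')) (fst (h 0))<..<X}) (at_left X)"
        by (intro eventually_at_left_real) simp
      moreover have "r < u x" if x: "x \<in> {max (fst (h r')) (fst (h 0))<..<X}" for x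
      proof (rule ccontr)
        assume "\<not> r < u x"
        have "u x \<in> {0<..<\<alpha>}" "fst (h (u x)) = x" using u[of x] x by auto
        with \<open>\<not> r < u x\<close> have "fst (h (u x)) \<le> fst (h r')"
          using mono_onD[OF assms(2), of "u x" r'] r' assms(4) by auto
        thus False using x \<open>fst (h (u x)) = x\<close> by simp
      qed
      ultimately show "eventually (\<lambda>x. r < u x) (at_left X)" by (rule eventually_mono)
    next
      fix r assume "\<alpha> < r"
      show "eventually (\<lambda>x. u x < r) (at_left X)"
        using near by (rule eventually_mono) (use u \<open>\<alpha> < r\<close> in force)
    qed
  qed
qed

lemma end_pieces_ordered:
  fixes h k :: "real \<Rightarrow> pt"
  assumes "below_y (h ` {0<..<1}) (k ` {0<..<1})" and "path h" and "path k"
    and "\<alpha> < 1" and "\<beta> < 1"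
    and "\<And>s. \<alpha> \<le> s \<Longrightarrow> s \<le> 1 \<Longrightarrow> fst (h s) = X"
    and "\<And>s. \<beta> \<le> s \<Longrightarrow> s \<le> 1 \<Longrightarrow> fst (k s) = X"
  shows "snd (h 1) \<le> snd (k 1)"
proof (rule below_y_limit[OF assms(1-3) trivial_limit_at_left_real tendsto_ident_at tendsto_ident_at])
  have "eventually (\<lambda>x. x \<in> {max (max \<alpha> \<beta>) 0<..<1}) (at_left (1::real))"
    using assms(4,5) by (intro eventually_at_left_real) simp
  thus "\<forall>\<^sub>F x in at_left 1. x \<in> {0<..<1} \<and> x \<in> {0<..<1} \<and> fst (h x) = fst (k x)"
    by (rule eventually_mono) (auto simp: assms(6,7))
qed auto

lemma entry_points_ordered:
  fixes h k :: "real \<Rightarrow> pt"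
  assumes "below_y (h ` {0<..<1}) (k ` {0<..<1})" and "path h" and "path k"
    and "mono_on {0..1} (\<lambda>s. fst (h s))" and "mono_on {0..1} (\<lambda>s. fst (k s))"
    and "0 < \<alpha>" "\<alpha> \<le> 1" "0 < \<beta>" "\<beta> \<le> 1"
    and "\<And>s. 0 \<le> s \<Longrightarrow> s < \<alpha> \<Longrightarrow> fst (h s) < X" and "fst (h \<alpha>) = X"
    and "\<And>s. 0 \<le> s \<Longrightarrow> s < \<beta> \<Longrightarrow> fst (k s) < X" and "fst (k \<beta>) = X"
  shows "snd (h \<alpha>) \<le> snd (k \<beta>)"
proof -
  obtain u where u: "(u \<longlongrightarrow> \<alpha>) (at_left X)"
      "eventually (\<lambda>x. u x \<in> {0<..<\<alpha>} \<and> fst (h (u x)) = x) (at_left X)"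
    using approach_hitting_time[OF assms(2,4,6,7,10,11)] by blast
  obtain w where w: "(w \<longlongrightarrow> \<beta>) (at_left X)"
      "eventually (\<lambda>x. w x \<in> {0<..<\<beta>} \<and> fst (k (w x)) = x) (at_left X)"
    using approach_hitting_time[OF assms(3,5,8,9,12,13)] by blast
  have "eventually (\<lambda>x. u x \<in> {0<..<1} \<and> w x \<in> {0<..<1} \<and> fst (h (u x)) = fst (k (w x)))
      (at_left X)"
    using eventually_conj[OF u(2) w(2)] by (rule eventually_mono) (use assms(7,9) in auto)
  thus ?thesis
    using below_y_limit[OF assms(1-3) trivial_limit_at_left_real u(1) w(1)] assms(6-9) by auto
qed

lemma vertical_end_piece_hit:
  fixes k :: "real \<Rightarrow> pt"
  assumes "path k" and "0 < \<beta>" and "\<beta> \<le> 1"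
    and "\<And>t. \<beta> \<le> t \<Longrightarrow> t \<le> 1 \<Longrightarrow> fst (k t) = X"
    and "snd (k \<beta>) \<le> y \<and> y < snd (k 1) \<or> snd (k 1) < y \<and> y \<le> snd (k \<beta>)"
  shows "(X, y) \<in> k ` {0<..<1}"
proof -
  have cont: "continuous_on {\<beta>..1} (\<lambda>t. snd (k t))"
    using assms(1,2) unfolding path_def by (intro continuous_intros) (auto elim: continuous_on_subset)
  obtain t where t: "\<beta> \<le> t" "t \<le> 1" "snd (k t) = y"
    using assms(5) IVT'[OF _ _ assms(3) cont, of y] IVT2'[OF _ _ assms(3) cont, of y] by force
  hence "k t = (X, y)" using assms(4) by (simp add: prod_eq_iff)
  moreover have "t \<noteq> 1" using t(3) assms(5) by auto
  hence "t \<in> {0<..<1}" using t(1,2) assms(2) by simp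
  ultimately show ?thesis by (metis rev_image_eqI)
qed

lemma crossing_endpoint:
  fixes h k :: "real \<Rightarrow> pt"
  assumes "path h" and "path k"
    and "mono_on {0..1} (\<lambda>s. fst (h s))" and "mono_on {0..1} (\<lambda>s. fst (k s))"
    and "below_y (h ` {0<..<1}) (k ` {0<..<1})"
    and "fst (h 1) = fst (k 1)" and "snd (k 1) < snd (h 1)"
  shows "h 1 \<in> k ` {0<..<1} \<or> k 1 \<in> h ` {0<..<1}"
proof -
  define X where "X = fst (h 1)"
  obtain \<alpha> where \<alpha>: "\<alpha> \<in> {0..1}" "\<And>s. 0 \<le> s \<Longrightarrow> s < \<alpha> \<Longrightarrow> fst (h s) < X"
      "\<And>s. \<alpha> \<le> s \<Longrightarrow> s \<le> 1 \<Longrightarrow> fst (h s) = X"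
    using first_hitting_time[OF assms(1,3)] unfolding X_def by blast
  obtain \<beta> where \<beta>: "\<beta> \<in> {0..1}" "\<And>s. 0 \<le> s \<Longrightarrow> s < \<beta> \<Longrightarrow> fst (k s) < X"
      "\<And>s. \<beta> \<le> s \<Longrightarrow> s \<le> 1 \<Longrightarrow> fst (k s) = X"
    using first_hitting_time[OF assms(2,4)] unfolding X_def assms(6) by blast
  obtain s\<^sub>0 t\<^sub>0 where overlap: "s\<^sub>0 \<in> {0<..<1}" "t\<^sub>0 \<in> {0<..<1}" "fst (h s\<^sub>0) = fst (k t\<^sub>0)"
    using assms(5) unfolding below_y_def overlap_x_def by blast
  have ends: "h 1 = (X, snd (h 1))" "k 1 = (X, snd (k 1))"
    by (simp_all add: X_def prod_eq_iff assms(6))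
  consider "\<alpha> < 1" "\<beta> < 1" | "\<alpha> = 1" | "\<beta> = 1" using \<alpha>(1) \<beta>(1) by fastforce
  thus ?thesis
  proof cases
    case 1
    have "snd (h 1) \<le> snd (k 1)"
      using end_pieces_ordered[OF assms(5,1,2) 1 \<alpha>(3) \<beta>(3)] .
    thus ?thesis using assms(7) by simp
  next
    case 2
    have "0 < \<beta>" using overlap \<alpha>(2)[of s\<^sub>0] \<beta>(3)[of t\<^sub>0] 2 by force
    have "snd (h 1) \<le> snd (k \<beta>)"
      using entry_points_ordered[OF assms(5,1-4), of 1 \<beta> X] \<alpha> \<beta> \<open>0 < \<beta>\<close> 2 by auto
    hence "(X, snd (h 1)) \<in> k ` {0<..<1}"
      using vertical_end_piece_hit[OF assms(2) \<open>0 < \<beta>\<close> _ \<beta>(3)] \<beta>(1) assms(7) by auto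
    thus ?thesis using ends by simp
  next
    case 3
    have "0 < \<alpha>" using overlap \<beta>(2)[of t\<^sub>0] \<alpha>(3)[of s\<^sub>0] 3 by force
    have "snd (h \<alpha>) \<le> snd (k 1)"
      using entry_points_ordered[OF assms(5,1-4), of \<alpha> 1 X] \<alpha> \<beta> \<open>0 < \<alpha>\<close> 3 by auto
    hence "(X, snd (k 1)) \<in> h ` {0<..<1}"
      using vertical_end_piece_hit[OF assms(1) \<open>0 < \<alpha>\<close> _ \<alpha>(3)] \<alpha>(1) assms(7) by auto
    thus ?thesis using ends by simp
  qed
qed

theorem lemma16:
  fixes S :: "pt set set" and R :: "(pt set \<times> pt set) set" and \<delta> :: real
    and e f :: "pt set" and v a w b :: pt
  assumes "approx_subdivision S R"
    and "delta_accurate \<delta> S R"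
    and "e \<in> S" and "f \<in> S"
    and "curve e v a" and "curve f w b"
    and "(e, f) \<in> R"
    and "fst a = fst b" and "snd a > snd b"
  shows "infdist a f < \<delta> \<or> infdist b e < \<delta>"
proof -
  obtain e' f' where e': "deformation \<delta> e e'" and f': "deformation \<delta> f f'"
    and below: "below_y e' f'"
    using assms(2,7) unfolding delta_accurate_def by blast
  obtain h where h: "path h" "h 0 = v" "h 1 = a" "e' = h ` {0<..<1}"
      "mono_on {0..1} (\<lambda>s. fst (h s))"
    using deformation_parametrisation[OF assms(5) e'] by blast
  obtain k where k: "path k" "k 0 = w" "k 1 = b" "f' = k ` {0<..<1}"
      "mono_on {0..1} (\<lambda>s. fst (k s))"
    using deformation_parametrisation[OF assms(6) f'] by blast
  have "a \<in> f' \<or> b \<in> e'"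
    using crossing_endpoint[OF h(1) k(1) h(5) k(5)] below h(3,4) k(3,4) assms(8,9) by simp
  thus ?thesis
    using deformation_infdist[OF assms(5) e'] deformation_infdist[OF assms(6) f'] by blast
qed

end
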